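(* For $m\ge 1$, let $\mathbf{D}_m=(d_{jk})$ be the $m\times m$ symmetric tridiagonal matrix with $d_{kk}=4k^2-6k+\tfrac52$ ($1\le k\le m$), $d_{k,k+1}=d_{k+1,k}=-k(2k-1)$ ($1\le k\le m-1$), and $d_{jk}=0$ if $|j-k|>1$. Then $\mathbf{D}_m$ is positive definite.
   Context: Equivalently, $\mathbf{D}_m=\mathbf{B}_m-\frac12\mathbf{E}_m$, where $\mathbf{E}_m$ is the $m\times m$ identity matrix and $\mathbf{B}_m$ is the symmetric tridiagonal matrix with diagonal entries $4k^2-6k+3$ and off-diagonal entries $-k(2k-1)$. *)

theory Defs
  imports Complex_Main
begin

text \<open>Entries of the m x m matrix D_m, indices 1-based (j,k in {1..m}).\<close>
definition D_entry :: "nat \<Rightarrow> nat \<Rightarrow> real" where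
  "D_entry j k =
     (if j = k then 4 * (real k)^2 - 6 * real k + 5/2
      else if j = k + 1 then - (real k * (2 * real k - 1))
      else if k = j + 1 then - (real j * (2 * real j - 1))
      else 0)"

definition pos_def_mat :: "nat \<Rightarrow> (nat \<Rightarrow> nat \<Rightarrow> real) \<Rightarrow> bool" where
  "pos_def_mat m A \<longleftrightarrow>
     (\<forall>j\<in>{1..m}. \<forall>k\<in>{1..m}. A j k = A k j) \<and>
     (\<forall>x :: nat \<Rightarrow> real. (\<exists>i\<in>{1..m}. x i \<noteq> 0) \<longrightarrow>
        (\<Sum>j=1..m. \<Sum>k=1..m. x j * A j k * x k) > 0)"

end

theory Submission
  imports Defs
begin

text \<open>Twice the quadratic form of D_m is the sum of squares
  sum_{k<m} ((2k-1) x_k - 2k x_{k+1})^2 + ((2m-1) x_m)^2,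
  i.e. D_m = L^T L / 2 for an upper bidiagonal L with diagonal entries 2k-1.
  Since these entries do not vanish, the form is positive off the origin:
  at the largest index i with x_i nonzero, the i-th square is ((2i-1) x_i)^2 > 0.\<close>

lemma bidiagonal_sum_squares_pos:
  fixes a b x :: "nat \<Rightarrow> real"
  assumes diag_nonzero: "\<And>k. k \<in> {1..m} \<Longrightarrow> a k \<noteq> 0"
    and "\<exists>i\<in>{1..m}. x i \<noteq> 0"
  shows "0 < (\<Sum>k=1..<m. (a k * x k - b k * x (Suc k))\<^sup>2) + (a m * x m)\<^sup>2"
proof -
  define S where "S = {i\<in>{1..m}. x i \<noteq> 0}"
  define i where "i = Max S"
  have "finite S" "S \<noteq> {}" using assms(2) by (auto simp: S_def)
  then have i: "i \<in> {1..m}" "x i \<noteq> 0" and i_max: "\<And>l. l \<in> S \<Longrightarrow> l \<le> i"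
    using Max_in Max_ge unfolding i_def S_def by blast+
  have squares_nonneg: "0 \<le> (\<Sum>k=1..<m. (a k * x k - b k * x (Suc k))\<^sup>2)"
    by (simp add: sum_nonneg)
  show ?thesis
  proof (cases "i = m")
    case True
    then show ?thesis using i diag_nonzero squares_nonneg
      by (simp add: add_nonneg_pos)
  next
    case False
    with i have "i < m" by simp
    then have "x (Suc i) = 0" using i_max[of "Suc i"] by (force simp: S_def)
    then have "0 < (a i * x i - b i * x (Suc i))\<^sup>2" using i diag_nonzero by simp
    with \<open>i < m\<close> i have "0 < (\<Sum>k=1..<m. (a k * x k - b k * x (Suc k))\<^sup>2)"
      by (intro sum_pos2[where i = i]) auto
    then show ?thesis by (simp add: add_pos_nonneg)
  qed
qed

lemma quadratic_form_Suc:
  fixes A :: "nat \<Rightarrow> nat \<Rightarrow> real"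
  assumes "\<And>j k. A j k = A k j"
  shows "(\<Sum>j=1..Suc m. \<Sum>k=1..Suc m. x j * A j k * x k)
    = (\<Sum>j=1..m. \<Sum>k=1..m. x j * A j k * x k)
      + 2 * x (Suc m) * (\<Sum>j=1..m. A j (Suc m) * x j)
      + A (Suc m) (Suc m) * (x (Suc m))\<^sup>2"
proof -
  have "(\<Sum>j=1..Suc m. \<Sum>k=1..Suc m. x j * A j k * x k)
      = (\<Sum>j=1..m. \<Sum>k=1..m. x j * A j k * x k)
        + (\<Sum>j=1..m. x j * A j (Suc m) * x (Suc m))
        + (\<Sum>k=1..m. x (Suc m) * A (Suc m) k * x k)
        + x (Suc m) * A (Suc m) (Suc m) * x (Suc m)"
    by (simp add: sum.distrib)
  also have "(\<Sum>k=1..m. x (Suc m) * A (Suc m) k * x k) = (\<Sum>j=1..m. x j * A j (Suc m) * x (Suc m))"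
    using assms by (simp add: mult.commute mult.left_commute)
  finally show ?thesis
    by (simp add: sum_distrib_left power2_eq_square algebra_simps)
qed

lemma D_entry_sym: "D_entry j k = D_entry k j"
  by (auto simp: D_entry_def)

lemma D_entry_last_column:
  assumes "m \<ge> 1"
  shows "(\<Sum>j=1..m. D_entry j (Suc m) * x j) = - (real m * (2 * real m - 1)) * x m"
proof -
  have "(\<Sum>j=1..m. D_entry j (Suc m) * x j) = (\<Sum>j\<in>{m}. D_entry j (Suc m) * x j)"
    using assms by (intro sum.mono_neutral_right) (auto simp: D_entry_def)
  then show ?thesis by (simp add: D_entry_def)
qed

lemma D_quadratic_form_sum_squares:
  assumes "m \<ge> 1"
  shows "(\<Sum>j=1..m. \<Sum>k=1..m. x j * D_entry j k * x k)
    = ((\<Sum>k=1..<m. ((2 * real k - 1) * x k - 2 * real k * x (Suc k))\<^sup>2)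
        + ((2 * real m - 1) * x m)\<^sup>2) / 2"
  using assms
proof (induction m rule: nat_induct_at_least)
  case base
  then show ?case by (simp add: D_entry_def power2_eq_square)
next
  case (Suc m)
  define S where "S = (\<Sum>k=1..<m. ((2 * real k - 1) * x k - 2 * real k * x (Suc k))\<^sup>2)"
  have diag: "D_entry (Suc m) (Suc m) = 4 * (real m + 1)\<^sup>2 - 6 * (real m + 1) + 5/2"
    by (simp add: D_entry_def)
  have "(\<Sum>j=1..Suc m. \<Sum>k=1..Suc m. x j * D_entry j k * x k)
      = (S + ((2 * real m - 1) * x m)\<^sup>2) / 2
        + 2 * x (Suc m) * (- (real m * (2 * real m - 1)) * x m)
        + D_entry (Suc m) (Suc m) * (x (Suc m))\<^sup>2"
    unfolding quadratic_form_Suc[OF D_entry_sym] Suc.IH D_entry_last_column[OF Suc.hyps] S_def ..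
  also have "\<dots> = (S + ((2 * real m - 1) * x m - 2 * real m * x (Suc m))\<^sup>2
      + ((2 * (real m + 1) - 1) * x (Suc m))\<^sup>2) / 2"
    unfolding diag by (simp add: field_simps power2_eq_square)
  also have "S + ((2 * real m - 1) * x m - 2 * real m * x (Suc m))\<^sup>2
      = (\<Sum>k=1..<Suc m. ((2 * real k - 1) * x k - 2 * real k * x (Suc k))\<^sup>2)"
    using Suc.hyps by (simp add: S_def)
  finally show ?case by simp
qed

theorem proposition4p1:
  fixes m :: nat
  assumes "m \<ge> 1"
  shows "pos_def_mat m D_entry"
  unfolding pos_def_mat_def
proof (intro conjI ballI allI impI)
  fix j k show "D_entry j k = D_entry k j" by (rule D_entry_sym)
next
  fix x :: "nat \<Rightarrow> real"
  assume "\<exists>i\<in>{1..m}. x i \<noteq> 0"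
  then have "0 < (\<Sum>k=1..<m. ((2 * real k - 1) * x k - 2 * real k * x (Suc k))\<^sup>2)
      + ((2 * real m - 1) * x m)\<^sup>2"
    by (intro bidiagonal_sum_squares_pos) auto
  then show "(\<Sum>j=1..m. \<Sum>k=1..m. x j * D_entry j k * x k) > 0"
    unfolding D_quadratic_form_sum_squares[OF assms] by simp
qed

end
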